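(* For any $\mathrm{LP}^{\mathrm{MLN}}$ program $\Pi$, the map \[ \phi(I)=I\cup\{\mathtt{unsat}(i,w_i,\mathbf c) : w_i:\mathit{Head}_i(\mathbf c)\leftarrow\mathit{Body}_i(\mathbf c)\in Gr(\Pi),\ I\not\models \mathit{Body}_i(\mathbf c)\rightarrow \mathit{Head}_i(\mathbf c)\} \] is a one-to-one correspondence between $\mathrm{SM}[\Pi]$ and the set of stable models of $\mathsf{lpmln2asp^{pnt}}(\Pi)$. Furthermore, for every $I\in\mathrm{SM}[\Pi]$, \[ W^{\rm pnt}_\Pi(I)=\exp\Big(-\sum_{\mathtt{unsat}(i,w_i,\mathbf c)\in\phi(I)} w_i\Big). \] Also, $\phi$ restricts to a one-to-one correspondence between the most probable stable models of $\Pi$ and the optimal stable models of $\mathsf{lpmln2asp^{pnt}}(\Pi)$.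
   Context: An $\mathrm{LP}^{\mathrm{MLN}}$ program is a finite set of weighted rules $w_i:\mathit{Head}_i(\mathbf x)\leftarrow \mathit{Body}_i(\mathbf x)$, indexed by $i$, where $\mathbf x$ is the list of global variables, $\mathit{Head}_i$ is a possibly empty disjunction of atoms $l_1;\dots;l_n$, $\mathit{Body}_i$ a conjunction of literals, and $w_i$ a real number or the symbol $\alpha$ (infinite weight). The Herbrand universe is finite; $Gr(\Pi)$ replaces global variables by all tuples $\mathbf c$. For ground $\Pi$ and interpretation $I$: $\overline{\Pi}$ drops weights, $\Pi_I$ is the set of rules satisfied by $I$, $\mathrm{SM}[\Pi]=\{I: I\text{ stable model of }\overline{\Pi_I}\}$; $W^{\rm pnt}_\Pi(I)=\exp(-\sum_{w:R\in\Pi,\ I\not\models R}w)$ if $I\in\mathrm{SM}[\Pi]$ and $0$ otherwise; $W_\Pi(I)=\exp(\sum_{w:R\in\Pi_I}w)$ if $I\in\mathrm{SM}[\Pi]$, else $0$; $P_\Pi(I)=\lim_{\alpha\to\infty}W_\Pi(I)/\sum_{J\in\mathrm{SM}[\Pi]}W_\Pi(J)$; most probable stable models maximize $P_\Pi$. Weak constraints: $:\sim F\ [\mathit{Weight}@\mathit{Level}]$ with $F$ a conjunction of literals, real weight, nonnegative integer level (optionally with a tuple of terms distinguishing instances). For $\Pi_1\cup\Pi_2$ ($\Pi_1$ without weak constraints, $\Pi_2$ ground weak constraints), stable models are those of $\Pi_1$; the penalty of $I$ at level $l$ is $\sum_{:\sim F[w@l]\in\Pi_2,\ I\models F}w$;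 $I$ is dominated by $I'$ if at some level $l$ the penalty of $I'$ is strictly smaller and they agree at all levels $k>l$; optimal stable models are those not dominated. $\mathsf{lpmln2asp^{pnt}}(\Pi)$ replaces each rule $w_i:\mathit{Head}_i(\mathbf x)\leftarrow\mathit{Body}_i(\mathbf x)$ by $\mathtt{unsat}(i,w_i,\mathbf x)\leftarrow \mathit{Body}_i(\mathbf x),\ \mathtt{not}\ \mathit{Head}_i(\mathbf x)$; $\mathit{Head}_i(\mathbf x)\leftarrow \mathit{Body}_i(\mathbf x),\ \mathtt{not}\ \mathtt{unsat}(i,w_i,\mathbf x)$; $:\sim \mathtt{unsat}(i,w_i,\mathbf x).\ [w'_i@l, i,\mathbf x]$, where $w'_i=1,\ l=1$ if $w_i=\alpha$ and $w'_i=w_i,\ l=0$ otherwise; $\mathtt{not}\ \mathit{Head}_i$ for $\mathit{Head}_i=l_1;\dots;l_n$ stands for $\mathtt{not}\ l_1,\dots,\mathtt{not}\ l_n$; $\mathtt{unsat}$ is a fresh predicate. In the weight formula hard weights are kept as the symbol $\alpha$. *)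

theory Defs
  imports Complex_Main
begin

text \<open>A ground rule  l1;...;ln <- a1,...,am, not b1,...,not bk  (head may be empty).\<close>
datatype 'b rule = Rule (head: "'b set") (pos: "'b set") (neg: "'b set")

definition body_sat :: "'b set \<Rightarrow> 'b rule \<Rightarrow> bool" where
  "body_sat I r \<longleftrightarrow> pos r \<subseteq> I \<and> neg r \<inter> I = {}"

definition sat_rule :: "'b set \<Rightarrow> 'b rule \<Rightarrow> bool" where
  "sat_rule I r \<longleftrightarrow> (body_sat I r \<longrightarrow> head r \<inter> I \<noteq> {})"

definition is_model :: "'b set \<Rightarrow> 'b rule set \<Rightarrow> bool" where
  "is_model I P \<longleftrightarrow> (\<forall>r\<in>P. sat_rule I r)"

definition reduct :: "'b rule set \<Rightarrow> 'b set \<Rightarrow> 'b rule set" where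
  "reduct P I = {Rule (head r) (pos r) {} | r. r \<in> P \<and> neg r \<inter> I = {}}"

definition stable :: "'b rule set \<Rightarrow> 'b set \<Rightarrow> bool" where
  "stable P I \<longleftrightarrow> is_model I (reduct P I) \<and> (\<forall>J. J \<subset> I \<longrightarrow> \<not> is_model J (reduct P I))"

text \<open>Ground weak constraint  :~ F [Weight@Level, id]  with F a conjunction of literals.\<close>
datatype ('b, 'd) wc = WC (wpos: "'b set") (wneg: "'b set") (wweight: real) (wlevel: nat) (wid: 'd)

definition penalty :: "('b, 'd) wc set \<Rightarrow> 'b set \<Rightarrow> nat \<Rightarrow> real" where
  "penalty W I l = (\<Sum>c\<in>{c\<in>W. wlevel c = l \<and> wpos c \<subseteq> I \<and> wneg c \<inter> I = {}}. wweight c)"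

definition dominated :: "('b, 'd) wc set \<Rightarrow> 'b set \<Rightarrow> 'b set \<Rightarrow> bool" where
  "dominated W I I' \<longleftrightarrow> (\<exists>l. penalty W I' l < penalty W I l \<and> (\<forall>k>l. penalty W I' k = penalty W I k))"

definition optimal :: "'b rule set \<Rightarrow> ('b, 'd) wc set \<Rightarrow> 'b set \<Rightarrow> bool" where
  "optimal P W I \<longleftrightarrow> stable P I \<and> \<not> (\<exists>I'. stable P I' \<and> dominated W I I')"

text \<open>Weights: a real number or the symbol alpha (hard).\<close>
datatype weight = Soft real | Hard

fun wval :: "weight \<Rightarrow> real \<Rightarrow> real" where
  "wval (Soft r) a = r"
| "wval Hard a = a"

text \<open>An LP^MLN program: rules indexed by idx; rule i has weight wt i; tup i is the
  (finite) set of tuples of Herbrand constants for its global variables; rl i c is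
  the ground rule Head_i(c) <- Body_i(c).  Gr(Pi) is the family indexed by (i,c).\<close>
record ('a, 'i, 'c) lpmln =
  idx :: "'i set"
  tup :: "'i \<Rightarrow> 'c set"
  wt  :: "'i \<Rightarrow> weight"
  rl  :: "'i \<Rightarrow> 'c \<Rightarrow> 'a rule"

definition gr_idx :: "('a, 'i, 'c) lpmln \<Rightarrow> ('i \<times> 'c) set" where
  "gr_idx \<Pi> = Sigma (idx \<Pi>) (tup \<Pi>)"

definition wf_lpmln :: "('a, 'i, 'c) lpmln \<Rightarrow> bool" where
  "wf_lpmln \<Pi> \<longleftrightarrow> finite (idx \<Pi>) \<and> (\<forall>i\<in>idx \<Pi>. finite (tup \<Pi> i)) \<and>
     (\<forall>(i,c)\<in>gr_idx \<Pi>. finite (head (rl \<Pi> i c)) \<and> finite (pos (rl \<Pi> i c)) \<and> finite (neg (rl \<Pi> i c)))"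

definition SM :: "('a, 'i, 'c) lpmln \<Rightarrow> 'a set set" where
  "SM \<Pi> = {I. stable {rl \<Pi> i c | i c. (i, c) \<in> gr_idx \<Pi> \<and> sat_rule I (rl \<Pi> i c)} I}"

definition W_pnt :: "('a, 'i, 'c) lpmln \<Rightarrow> real \<Rightarrow> 'a set \<Rightarrow> real" where
  "W_pnt \<Pi> a I = (if I \<in> SM \<Pi> then
     exp (- (\<Sum>(i,c)\<in>{(i,c)\<in>gr_idx \<Pi>. \<not> sat_rule I (rl \<Pi> i c)}. wval (wt \<Pi> i) a)) else 0)"

definition W :: "('a, 'i, 'c) lpmln \<Rightarrow> real \<Rightarrow> 'a set \<Rightarrow> real" where
  "W \<Pi> a I = (if I \<in> SM \<Pi> then
     exp (\<Sum>(i,c)\<in>{(i,c)\<in>gr_idx \<Pi>. sat_rule I (rl \<Pi> i c)}. wval (wt \<Pi> i) a) else 0)"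

definition Prob :: "('a, 'i, 'c) lpmln \<Rightarrow> 'a set \<Rightarrow> real" where
  "Prob \<Pi> I = Lim at_top (\<lambda>a. W \<Pi> a I / (\<Sum>J\<in>SM \<Pi>. W \<Pi> a J))"

definition most_probable :: "('a, 'i, 'c) lpmln \<Rightarrow> 'a set set" where
  "most_probable \<Pi> = {I \<in> SM \<Pi>. \<forall>J\<in>SM \<Pi>. Prob \<Pi> J \<le> Prob \<Pi> I}"

datatype ('a, 'i, 'c) tatom = Atom 'a | Unsat 'i weight 'c

definition tr_rules :: "('a, 'i, 'c) lpmln \<Rightarrow> ('a, 'i, 'c) tatom rule set" where
  "tr_rules \<Pi> = (\<Union>(i,c)\<in>gr_idx \<Pi>.
     (let r = rl \<Pi> i c; u = Unsat i (wt \<Pi> i) c in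
       { Rule {u} (Atom ` pos r) (Atom ` neg r \<union> Atom ` head r),
         Rule (Atom ` head r) (Atom ` pos r) (Atom ` neg r \<union> {u}) }))"

definition tr_wcs :: "('a, 'i, 'c) lpmln \<Rightarrow> (('a, 'i, 'c) tatom, 'i \<times> 'c) wc set" where
  "tr_wcs \<Pi> = (\<lambda>(i,c). WC {Unsat i (wt \<Pi> i) c} {}
       (case wt \<Pi> i of Hard \<Rightarrow> 1 | Soft r \<Rightarrow> r)
       (case wt \<Pi> i of Hard \<Rightarrow> 1 | Soft r \<Rightarrow> 0) (i, c)) ` gr_idx \<Pi>"

definition phi :: "('a, 'i, 'c) lpmln \<Rightarrow> 'a set \<Rightarrow> ('a, 'i, 'c) tatom set" where
  "phi \<Pi> I = Atom ` I \<union> {Unsat i (wt \<Pi> i) c | i c. (i, c) \<in> gr_idx \<Pi> \<and> \<not> sat_rule I (rl \<Pi> i c)}"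

end

theory Submission
  imports Defs "HOL-Library.Product_Lexorder"
begin

text \<open>
  A stable model J of the translation is determined by its original atoms I: the first rule of
  each pair puts unsat(i,w_i,c) into J exactly when I violates the ground rule (i,c), and then the
  second rule is blocked; when I satisfies the rule, the second rule acts like the original one.
  Hence, relative to \<phi>(I), models of the reduct of the translation correspond to models of the
  reduct of the rules satisfied by I, and minimality transfers in both directions.

  Writing h(I) for the number of violated hard rules and s(I) for the total weight of violated
  soft rules, W(I) is a constant multiple of exp(-(\<alpha> h(I) + s(I))). As \<alpha> \<rightarrow> \<infinity> the normalised
  weight tends to zero unless h(I) is minimal, and is proportional to exp(-s(I)) otherwise; so
  the most probable stable models are the lexicographic minimisers of (h, s). The weak constraints
  of the translation charge exactly h at level 1 and s at level 0, so these are also the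
  undominated stable models.
\<close>

lemma is_model_reduct_iff:
  "is_model K (reduct P J) \<longleftrightarrow>
     (\<forall>r\<in>P. neg r \<inter> J = {} \<longrightarrow> pos r \<subseteq> K \<longrightarrow> head r \<inter> K \<noteq> {})"
proof -
  have "is_model K (reduct P J) \<longleftrightarrow>
      (\<forall>r\<in>P. neg r \<inter> J = {} \<longrightarrow> sat_rule K (Rule (head r) (pos r) {}))"
    unfolding is_model_def reduct_def by blast
  then show ?thesis by (simp add: sat_rule_def body_sat_def)
qed

lemma is_model_reduct_self:
  "(\<forall>r\<in>P. sat_rule I r) \<Longrightarrow> is_model I (reduct P I)"
  unfolding is_model_reduct_iff sat_rule_def body_sat_def by blast

lemma stable_subset_heads:
  assumes "stable P I"
  shows "I \<subseteq> (\<Union>r\<in>P. head r)"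
proof -
  let ?H = "\<Union>r\<in>P. head r"
  have "is_model I (reduct P I)" using assms unfolding stable_def by blast
  then have "is_model (I \<inter> ?H) (reduct P I)"
    unfolding is_model_reduct_iff by fastforce
  then have "\<not> I \<inter> ?H \<subset> I" using assms unfolding stable_def by blast
  then show ?thesis by blast
qed

text \<open>The limit of exp(-(a h x + s x)) \<cdot> exp(a \<cdot> min h) as a \<rightarrow> \<infinity>.\<close>
definition leading_weight :: "('x \<Rightarrow> real) \<Rightarrow> ('x \<Rightarrow> real) \<Rightarrow> 'x set \<Rightarrow> 'x \<Rightarrow> real" where
  "leading_weight h s S x = (if h x = Min (h ` S) then exp (- s x) else 0)"

lemma tendsto_exp_neg_linear_at_top:
  fixes d s :: real
  assumes "d > 0"
  shows "((\<lambda>a. exp (- (a * d + s))) \<longlongrightarrow> 0) at_top"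
proof -
  have "filterlim (\<lambda>a. s + a * d) at_top at_top"
    by (rule filterlim_tendsto_add_at_top[OF tendsto_const
          filterlim_at_top_mult_tendsto_pos[OF tendsto_const assms filterlim_ident]])
  then have "filterlim (\<lambda>a. - (a * d + s)) at_bot at_top"
    by (simp add: filterlim_uminus_at_bot add.commute)
  then show ?thesis by (rule filterlim_compose[OF exp_at_bot])
qed

lemma sum_leading_weight_pos:
  assumes "finite S" "S \<noteq> {}"
  shows "(\<Sum>y\<in>S. leading_weight h s S y) > 0"
proof -
  obtain y0 where "y0 \<in> S" "h y0 = Min (h ` S)"
    using Min_in[of "h ` S"] assms by fastforce
  then show ?thesis
    by (intro sum_pos2[OF assms(1)]) (auto simp: leading_weight_def)
qed

lemma tendsto_exp_ratio_leading_weight: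
  assumes "finite S" "x \<in> S"
  shows "((\<lambda>a. exp (- (a * h x + s x)) / (\<Sum>y\<in>S. exp (- (a * h y + s y))))
           \<longlongrightarrow> leading_weight h s S x / (\<Sum>y\<in>S. leading_weight h s S y)) at_top"
proof -
  define m where "m = Min (h ` S)"
  define g where "g = (\<lambda>y a. exp (- (a * (h y - m) + s y)))"
  have factor: "exp (- (a * h y + s y)) = exp (- (a * m)) * g y a" for y a
    unfolding g_def mult_exp_exp by (simp add: algebra_simps)
  have ratio: "exp (- (a * h x + s x)) / (\<Sum>y\<in>S. exp (- (a * h y + s y)))
      = g x a / (\<Sum>y\<in>S. g y a)" for a
    unfolding factor sum_distrib_left[symmetric] by simp
  have lim: "(g y \<longlongrightarrow> leading_weight h s S y) at_top" if "y \<in> S" for y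
  proof (cases "h y = m")
    case True
    then have "g y = (\<lambda>a. exp (- s y))" by (simp add: g_def)
    then show ?thesis using True by (simp add: leading_weight_def m_def)
  next
    case False
    moreover have "m \<le> h y" using assms(1) that by (simp add: m_def)
    ultimately show ?thesis
      using tendsto_exp_neg_linear_at_top[of "h y - m" "s y"]
      by (simp add: g_def leading_weight_def m_def)
  qed
  have "((\<lambda>a. \<Sum>y\<in>S. g y a) \<longlongrightarrow> (\<Sum>y\<in>S. leading_weight h s S y)) at_top"
    by (intro tendsto_sum lim)
  moreover have "(\<Sum>y\<in>S. leading_weight h s S y) \<noteq> 0"
    using sum_leading_weight_pos[OF assms(1), of h s] assms(2) by (metis empty_iff less_irrefl)
  ultimately have "((\<lambda>a. g x a / (\<Sum>y\<in>S. g y a))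
           \<longlongrightarrow> leading_weight h s S x / (\<Sum>y\<in>S. leading_weight h s S y)) at_top"
    by (intro tendsto_divide lim assms(2))
  then show ?thesis by (simp only: ratio)
qed

lemma leading_weight_maximal_iff_lex_minimal:
  fixes h s :: "'x \<Rightarrow> real"
  assumes "finite S" "x \<in> S"
  shows "(\<forall>y\<in>S. leading_weight h s S y \<le> leading_weight h s S x) \<longleftrightarrow>
         (\<forall>y\<in>S. (h x, s x) \<le> (h y, s y))"
proof -
  define m where "m = Min (h ` S)"
  have m_le: "m \<le> h y" if "y \<in> S" for y using assms(1) that by (simp add: m_def)
  obtain y0 where y0: "y0 \<in> S" "h y0 = m"
    using Min_in[of "h ` S"] assms by (fastforce simp: m_def)
  show ?thesis
  proof
    assume max: "\<forall>y\<in>S. leading_weight h s S y \<le> leading_weight h s S x"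
    have "0 < leading_weight h s S y0" using y0 by (simp add: leading_weight_def m_def)
    also have "\<dots> \<le> leading_weight h s S x" using max y0(1) by blast
    finally have hx: "h x = m" by (auto simp: leading_weight_def m_def split: if_splits)
    show "\<forall>y\<in>S. (h x, s x) \<le> (h y, s y)"
    proof
      fix y assume y: "y \<in> S"
      show "(h x, s x) \<le> (h y, s y)"
      proof (cases "h y = m")
        case True
        then show ?thesis using max y hx by (auto simp: leading_weight_def m_def)
      next
        case False
        then show ?thesis using m_le[OF y] hx by simp
      qed
    qed
  next
    assume min: "\<forall>y\<in>S. (h x, s x) \<le> (h y, s y)"
    have hx: "h x = m" using min y0 m_le[OF assms(2)] by fastforce
    show "\<forall>y\<in>S. leading_weight h s S y \<le> leading_weight h s S x"
      using min hx by (auto simp: leading_weight_def m_def)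
  qed
qed

lemma penalty_above_level:
  assumes "\<forall>c\<in>Cs. wlevel c < l"
  shows "penalty Cs I l = 0"
proof -
  have "{c\<in>Cs. wlevel c = l \<and> wpos c \<subseteq> I \<and> wneg c \<inter> I = {}} = {}"
    using assms by auto
  then show ?thesis unfolding penalty_def by (simp only: sum.empty)
qed

lemma dominated_iff_lex_less:
  assumes "\<forall>c\<in>Cs. wlevel c \<le> 1"
  shows "dominated Cs I I' \<longleftrightarrow>
         (penalty Cs I' 1, penalty Cs I' 0) < (penalty Cs I 1, penalty Cs I 0)"
proof -
  have high: "penalty Cs J l = 0" if "1 < l" for J l
    using assms that by (intro penalty_above_level) force
  show ?thesis
  proof
    assume "dominated Cs I I'"
    then obtain l where less: "penalty Cs I' l < penalty Cs I l"
      and above: "\<forall>k>l. penalty Cs I' k = penalty Cs I k"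
      unfolding dominated_def by blast
    have "l \<le> 1" using less high by (metis less_irrefl not_le)
    then consider "l = 0" | "l = 1" by linarith
    then show "(penalty Cs I' 1, penalty Cs I' 0) < (penalty Cs I 1, penalty Cs I 0)"
    proof cases
      case 1
      then have "penalty Cs I' 1 = penalty Cs I 1" using above by simp
      then show ?thesis using less 1 by simp
    next
      case 2
      then show ?thesis using less by simp
    qed
  next
    assume "(penalty Cs I' 1, penalty Cs I' 0) < (penalty Cs I 1, penalty Cs I 0)"
    then consider "penalty Cs I' 1 < penalty Cs I 1"
      | "penalty Cs I' 1 = penalty Cs I 1" "penalty Cs I' 0 < penalty Cs I 0"
      by (simp only: less_prod_def' fst_conv snd_conv) blast
    then show "dominated Cs I I'"
    proof cases
      case 1
      moreover have "\<forall>k>1. penalty Cs I' k = penalty Cs I k" by (simp add: high)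
      ultimately show ?thesis unfolding dominated_def by blast
    next
      case 2
      moreover have "\<forall>k>0. penalty Cs I' k = penalty Cs I k"
        using 2(1) high by (metis One_nat_def Suc_lessI)
      ultimately show ?thesis unfolding dominated_def by blast
    qed
  qed
qed

lemma bij_betw_restrict:
  assumes "bij_betw f A B" "A' \<subseteq> A" "B' \<subseteq> B" "\<And>x. x \<in> A \<Longrightarrow> f x \<in> B' \<longleftrightarrow> x \<in> A'"
  shows "bij_betw f A' B'"
proof (rule bij_betw_subset[OF assms(1,2)])
  show "f ` A' = B'"
  proof
    show "f ` A' \<subseteq> B'" using assms(2,4) by blast
    show "B' \<subseteq> f ` A'"
    proof
      fix y assume "y \<in> B'"
      then obtain x where "x \<in> A" "y = f x"
        using assms(1,3) by (auto simp: bij_betw_def)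
      then show "y \<in> f ` A'" using assms(4) \<open>y \<in> B'\<close> by blast
    qed
  qed
qed

definition sat_rules :: "('a, 'i, 'c) lpmln \<Rightarrow> 'a set \<Rightarrow> 'a rule set" where
  "sat_rules \<Pi> I = {rl \<Pi> i c | i c. (i, c) \<in> gr_idx \<Pi> \<and> sat_rule I (rl \<Pi> i c)}"

lemma SM_iff_stable_sat_rules: "I \<in> SM \<Pi> \<longleftrightarrow> stable (sat_rules \<Pi> I) I"
  by (simp add: SM_def sat_rules_def)

lemma is_model_reduct_sat_rules_iff:
  "is_model K (reduct (sat_rules \<Pi> I) J) \<longleftrightarrow>
     (\<forall>(i, c)\<in>gr_idx \<Pi>. sat_rule I (rl \<Pi> i c) \<longrightarrow> neg (rl \<Pi> i c) \<inter> J = {} \<longrightarrow>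
        pos (rl \<Pi> i c) \<subseteq> K \<longrightarrow> head (rl \<Pi> i c) \<inter> K \<noteq> {})"
  unfolding is_model_reduct_iff sat_rules_def by blast

definition atoms :: "('a, 'i, 'c) tatom set \<Rightarrow> 'a set" where
  "atoms J = {a. Atom a \<in> J}"

lemma atoms_phi [simp]: "atoms (phi \<Pi> I) = I"
  by (auto simp: atoms_def phi_def)

lemma Unsat_in_phi_iff:
  "Unsat i w c \<in> phi \<Pi> I \<longleftrightarrow> w = wt \<Pi> i \<and> (i, c) \<in> gr_idx \<Pi> \<and> \<not> sat_rule I (rl \<Pi> i c)"
  by (auto simp: phi_def)

lemma image_Atom_subset_iff: "Atom ` X \<subseteq> K \<longleftrightarrow> X \<subseteq> atoms K"
  by (auto simp: atoms_def)

lemma image_Atom_disjoint_iff: "Atom ` X \<inter> J = {} \<longleftrightarrow> X \<inter> atoms J = {}"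
  by (auto simp: atoms_def)

lemma is_model_reduct_tr_rules_iff:
  "is_model K (reduct (tr_rules \<Pi>) J) \<longleftrightarrow>
     (\<forall>(i, c)\<in>gr_idx \<Pi>. pos (rl \<Pi> i c) \<subseteq> atoms K \<longrightarrow> neg (rl \<Pi> i c) \<inter> atoms J = {} \<longrightarrow>
        (head (rl \<Pi> i c) \<inter> atoms J = {} \<longrightarrow> Unsat i (wt \<Pi> i) c \<in> K) \<and>
        (Unsat i (wt \<Pi> i) c \<notin> J \<longrightarrow> head (rl \<Pi> i c) \<inter> atoms K \<noteq> {}))"
  unfolding is_model_reduct_iff tr_rules_def Let_def
  by (auto simp: image_Atom_subset_iff image_Atom_disjoint_iff Int_Un_distrib2)

lemma phi_atoms_subset_model:
  assumes model: "is_model K (reduct (tr_rules \<Pi>) J)" and sub: "atoms J \<subseteq> atoms K"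
  shows "phi \<Pi> (atoms J) \<subseteq> K"
proof
  fix x assume "x \<in> phi \<Pi> (atoms J)"
  then consider a where "x = Atom a" "a \<in> atoms J"
    | i c where "x = Unsat i (wt \<Pi> i) c" "(i, c) \<in> gr_idx \<Pi>" "\<not> sat_rule (atoms J) (rl \<Pi> i c)"
    by (auto simp: phi_def)
  then show "x \<in> K"
  proof cases
    case 1
    then show ?thesis using sub by (auto simp: atoms_def)
  next
    case 2
    then show ?thesis using model sub
      unfolding is_model_reduct_tr_rules_iff sat_rule_def body_sat_def by fast
  qed
qed

lemma is_model_reduct_sat_rules_atoms:
  assumes "is_model K (reduct (tr_rules \<Pi>) (phi \<Pi> I))"
  shows "is_model (atoms K) (reduct (sat_rules \<Pi> I) I)"
  using assms
  unfolding is_model_reduct_sat_rules_iff is_model_reduct_tr_rules_iff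
  by (fastforce simp: Unsat_in_phi_iff)

lemma is_model_reduct_tr_rules_phi_diff:
  assumes sub: "I' \<subseteq> I" and model: "is_model I' (reduct (sat_rules \<Pi> I) I)"
  shows "is_model (phi \<Pi> I - Atom ` (I - I')) (reduct (tr_rules \<Pi>) (phi \<Pi> I))"
proof -
  have atoms_K: "atoms (phi \<Pi> I - Atom ` (I - I')) = I'"
    using sub by (auto simp: atoms_def phi_def)
  show ?thesis
    unfolding is_model_reduct_tr_rules_iff atoms_K atoms_phi
  proof (clarify, intro conjI impI)
    fix i c assume gr: "(i, c) \<in> gr_idx \<Pi>"
      and p: "pos (rl \<Pi> i c) \<subseteq> I'" and n: "neg (rl \<Pi> i c) \<inter> I = {}"
    show "Unsat i (wt \<Pi> i) c \<in> phi \<Pi> I - Atom ` (I - I')"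
      if "head (rl \<Pi> i c) \<inter> I = {}"
      using gr p n that sub by (auto simp: Unsat_in_phi_iff sat_rule_def body_sat_def)
    show "head (rl \<Pi> i c) \<inter> I' \<noteq> {}" if "Unsat i (wt \<Pi> i) c \<notin> phi \<Pi> I"
      using model gr p n that unfolding is_model_reduct_sat_rules_iff
      by (auto simp: Unsat_in_phi_iff)
  qed
qed

lemma stable_tr_rules_phi_iff: "stable (tr_rules \<Pi>) (phi \<Pi> I) \<longleftrightarrow> I \<in> SM \<Pi>"
proof -
  have self: "is_model I (reduct (sat_rules \<Pi> I) I)"
    by (rule is_model_reduct_self) (auto simp: sat_rules_def)
  have model_phi: "is_model (phi \<Pi> I) (reduct (tr_rules \<Pi>) (phi \<Pi> I))"
    using is_model_reduct_tr_rules_phi_diff[OF order_refl self] by simp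
  show ?thesis
  proof
    assume st: "stable (tr_rules \<Pi>) (phi \<Pi> I)"
    have "\<not> is_model I' (reduct (sat_rules \<Pi> I) I)" if "I' \<subset> I" for I'
    proof
      assume "is_model I' (reduct (sat_rules \<Pi> I) I)"
      then have "is_model (phi \<Pi> I - Atom ` (I - I')) (reduct (tr_rules \<Pi>) (phi \<Pi> I))"
        using that by (intro is_model_reduct_tr_rules_phi_diff) auto
      moreover have "phi \<Pi> I - Atom ` (I - I') \<subset> phi \<Pi> I"
        using that by (auto simp: phi_def)
      ultimately show False using st unfolding stable_def by blast
    qed
    then show "I \<in> SM \<Pi>" using self unfolding SM_iff_stable_sat_rules stable_def by blast
  next
    assume "I \<in> SM \<Pi>"
    then have min: "\<not> is_model I' (reduct (sat_rules \<Pi> I) I)" if "I' \<subset> I" for I'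
      using that unfolding SM_iff_stable_sat_rules stable_def by blast
    have "\<not> is_model K (reduct (tr_rules \<Pi>) (phi \<Pi> I))" if "K \<subset> phi \<Pi> I" for K
    proof
      assume model: "is_model K (reduct (tr_rules \<Pi>) (phi \<Pi> I))"
      have "atoms K \<subseteq> I" using that by (auto simp: atoms_def phi_def)
      moreover have "is_model (atoms K) (reduct (sat_rules \<Pi> I) I)"
        using model by (rule is_model_reduct_sat_rules_atoms)
      ultimately have "atoms K = I" using min by blast
      then have "phi \<Pi> I \<subseteq> K" using phi_atoms_subset_model[OF model] by simp
      then show False using that by blast
    qed
    then show "stable (tr_rules \<Pi>) (phi \<Pi> I)" using model_phi unfolding stable_def by blast
  qed
qed

lemma stable_tr_rules_eq_phi:
  assumes st: "stable (tr_rules \<Pi>) J"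
  shows "J = phi \<Pi> (atoms J)"
proof
  have model: "is_model J (reduct (tr_rules \<Pi>) J)" using st unfolding stable_def by blast
  show "J \<subseteq> phi \<Pi> (atoms J)"
  proof
    fix x assume x: "x \<in> J"
    show "x \<in> phi \<Pi> (atoms J)"
    \<comment> \<open>an unsat atom outside \<phi>(atoms J) heads no applicable rule, so dropping it keeps a model\<close>
    proof (rule ccontr)
      assume x_notin: "x \<notin> phi \<Pi> (atoms J)"
      then have atoms_eq: "atoms (J - {x}) = atoms J" by (auto simp: atoms_def phi_def)
      have "is_model (J - {x}) (reduct (tr_rules \<Pi>) J)"
        unfolding is_model_reduct_tr_rules_iff atoms_eq
      proof (clarify, intro conjI impI)
        fix i c assume gr: "(i, c) \<in> gr_idx \<Pi>"
          and p: "pos (rl \<Pi> i c) \<subseteq> atoms J" and n: "neg (rl \<Pi> i c) \<inter> atoms J = {}"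
        show "Unsat i (wt \<Pi> i) c \<in> J - {x}" if h: "head (rl \<Pi> i c) \<inter> atoms J = {}"
        proof -
          have "Unsat i (wt \<Pi> i) c \<in> J"
            using model gr p n h unfolding is_model_reduct_tr_rules_iff by blast
          moreover have "Unsat i (wt \<Pi> i) c \<in> phi \<Pi> (atoms J)"
            using gr p n h by (auto simp: Unsat_in_phi_iff sat_rule_def body_sat_def)
          ultimately show ?thesis using x_notin by blast
        qed
        show "head (rl \<Pi> i c) \<inter> atoms J \<noteq> {}" if "Unsat i (wt \<Pi> i) c \<notin> J"
          using model gr p n that unfolding is_model_reduct_tr_rules_iff by blast
      qed
      moreover have "J - {x} \<subset> J" using x by blast
      ultimately show False using st unfolding stable_def by blast
    qed
  qed
  show "phi \<Pi> (atoms J) \<subseteq> J" using phi_atoms_subset_model[OF model] by blast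
qed

lemma bij_betw_phi_SM: "bij_betw (phi \<Pi>) (SM \<Pi>) {J. stable (tr_rules \<Pi>) J}"
proof (rule bij_betw_byWitness[where f' = atoms])
  show "\<forall>J\<in>{J. stable (tr_rules \<Pi>) J}. phi \<Pi> (atoms J) = J"
    using stable_tr_rules_eq_phi by force
  then show "atoms ` {J. stable (tr_rules \<Pi>) J} \<subseteq> SM \<Pi>"
    using stable_tr_rules_phi_iff by force
qed (auto simp: stable_tr_rules_phi_iff)

definition violated :: "('a, 'i, 'c) lpmln \<Rightarrow> 'a set \<Rightarrow> ('i \<times> 'c) set" where
  "violated \<Pi> I = {(i, c) \<in> gr_idx \<Pi>. \<not> sat_rule I (rl \<Pi> i c)}"

lemma Unsat_phi_eq_image_violated:
  fixes \<Pi> :: "('a, 'i, 'c) lpmln"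
  shows "{(i, w, c). Unsat i w c \<in> phi \<Pi> I} = (\<lambda>(i, c). (i, wt \<Pi> i, c)) ` violated \<Pi> I"
proof (rule set_eqI)
  fix x :: "'i \<times> weight \<times> 'c"
  obtain i w c where x: "x = (i, w, c)" by (cases x)
  show "x \<in> {(i, w, c). Unsat i w c \<in> phi \<Pi> I} \<longleftrightarrow>
        x \<in> (\<lambda>(i, c). (i, wt \<Pi> i, c)) ` violated \<Pi> I"
    unfolding x by (auto simp: Unsat_in_phi_iff violated_def image_iff)
qed

lemma W_pnt_eq_sum_Unsat:
  assumes "I \<in> SM \<Pi>"
  shows "W_pnt \<Pi> a I = exp (- (\<Sum>(i, w, c)\<in>{(i, w, c). Unsat i w c \<in> phi \<Pi> I}. wval w a))"
proof -
  have "inj_on (\<lambda>(i, c). (i, wt \<Pi> i, c)) (violated \<Pi> I)" by (auto simp: inj_on_def)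
  then have "(\<Sum>(i, w, c)\<in>{(i, w, c). Unsat i w c \<in> phi \<Pi> I}. wval w a)
      = (\<Sum>(i, c)\<in>violated \<Pi> I. wval (wt \<Pi> i) a)"
    unfolding Unsat_phi_eq_image_violated by (simp add: sum.reindex case_prod_unfold comp_def)
  then show ?thesis using assms by (simp add: W_pnt_def violated_def)
qed

fun hard_part :: "weight \<Rightarrow> real" where
  "hard_part (Soft r) = 0"
| "hard_part Hard = 1"

fun soft_part :: "weight \<Rightarrow> real" where
  "soft_part (Soft r) = r"
| "soft_part Hard = 0"

lemma wval_eq_hard_soft: "wval w a = a * hard_part w + soft_part w"
  by (cases w) simp_all

definition hard_penalty :: "('a, 'i, 'c) lpmln \<Rightarrow> 'a set \<Rightarrow> real" where
  "hard_penalty \<Pi> I = (\<Sum>(i, c)\<in>violated \<Pi> I. hard_part (wt \<Pi> i))"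

definition soft_penalty :: "('a, 'i, 'c) lpmln \<Rightarrow> 'a set \<Rightarrow> real" where
  "soft_penalty \<Pi> I = (\<Sum>(i, c)\<in>violated \<Pi> I. soft_part (wt \<Pi> i))"

lemma finite_gr_idx: "wf_lpmln \<Pi> \<Longrightarrow> finite (gr_idx \<Pi>)"
  unfolding wf_lpmln_def gr_idx_def by auto

lemma finite_violated: "wf_lpmln \<Pi> \<Longrightarrow> finite (violated \<Pi> I)"
  by (rule finite_subset[OF _ finite_gr_idx]) (auto simp: violated_def)

lemma finite_SM:
  assumes "wf_lpmln \<Pi>"
  shows "finite (SM \<Pi>)"
proof -
  let ?H = "\<Union>(i, c)\<in>gr_idx \<Pi>. head (rl \<Pi> i c)"
  have "I \<subseteq> ?H" if "I \<in> SM \<Pi>" for I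
    using stable_subset_heads[of "sat_rules \<Pi> I" I] that
    unfolding SM_iff_stable_sat_rules sat_rules_def by auto
  then have "SM \<Pi> \<subseteq> Pow ?H" by blast
  moreover have "finite ?H" using assms finite_gr_idx[OF assms] unfolding wf_lpmln_def by auto
  ultimately show ?thesis by (meson finite_Pow_iff finite_subset)
qed

lemma W_eq_exp_penalties:
  assumes wf: "wf_lpmln \<Pi>" and I: "I \<in> SM \<Pi>"
  shows "W \<Pi> a I = exp (\<Sum>(i, c)\<in>gr_idx \<Pi>. wval (wt \<Pi> i) a) *
                     exp (- (a * hard_penalty \<Pi> I + soft_penalty \<Pi> I))"
proof -
  let ?f = "\<lambda>(i, c). wval (wt \<Pi> i) a"
  let ?S = "{(i, c) \<in> gr_idx \<Pi>. sat_rule I (rl \<Pi> i c)}"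
  have fin: "finite ?S" "finite (violated \<Pi> I)"
    by (rule finite_subset[OF _ finite_gr_idx[OF wf]], fast) (rule finite_violated[OF wf])
  have "gr_idx \<Pi> = ?S \<union> violated \<Pi> I" "?S \<inter> violated \<Pi> I = {}"
    by (auto simp: violated_def)
  then have "sum ?f (gr_idx \<Pi>) = sum ?f ?S + sum ?f (violated \<Pi> I)"
    using sum.union_disjoint[OF fin] by simp
  moreover have "sum ?f (violated \<Pi> I) = a * hard_penalty \<Pi> I + soft_penalty \<Pi> I"
    by (simp add: hard_penalty_def soft_penalty_def wval_eq_hard_soft sum.distrib
        sum_distrib_left case_prod_unfold)
  ultimately have "sum ?f ?S = sum ?f (gr_idx \<Pi>) - (a * hard_penalty \<Pi> I + soft_penalty \<Pi> I)"
    by simp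
  then have "W \<Pi> a I = exp (sum ?f (gr_idx \<Pi>) - (a * hard_penalty \<Pi> I + soft_penalty \<Pi> I))"
    using I by (simp add: W_def)
  then show ?thesis by (simp only: exp_diff exp_minus divide_inverse)
qed

lemma Prob_eq_leading_weight:
  assumes wf: "wf_lpmln \<Pi>" and I: "I \<in> SM \<Pi>"
  shows "Prob \<Pi> I = leading_weight (hard_penalty \<Pi>) (soft_penalty \<Pi>) (SM \<Pi>) I /
           (\<Sum>J\<in>SM \<Pi>. leading_weight (hard_penalty \<Pi>) (soft_penalty \<Pi>) (SM \<Pi>) J)"
proof -
  define T where "T a = exp (\<Sum>(i, c)\<in>gr_idx \<Pi>. wval (wt \<Pi> i) a)" for a
  define E where "E a J = exp (- (a * hard_penalty \<Pi> J + soft_penalty \<Pi> J))" for a J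
  have ratio: "W \<Pi> a I / (\<Sum>J\<in>SM \<Pi>. W \<Pi> a J) = E a I / (\<Sum>J\<in>SM \<Pi>. E a J)" for a
  proof -
    have "W \<Pi> a J = T a * E a J" if "J \<in> SM \<Pi>" for J
      using W_eq_exp_penalties[OF wf that] by (simp add: T_def E_def)
    moreover have "T a \<noteq> 0" by (simp add: T_def)
    ultimately show ?thesis using I by (simp add: sum_distrib_left[symmetric])
  qed
  have "((\<lambda>a. W \<Pi> a I / (\<Sum>J\<in>SM \<Pi>. W \<Pi> a J)) \<longlongrightarrow>
      leading_weight (hard_penalty \<Pi>) (soft_penalty \<Pi>) (SM \<Pi>) I /
      (\<Sum>J\<in>SM \<Pi>. leading_weight (hard_penalty \<Pi>) (soft_penalty \<Pi>) (SM \<Pi>) J)) at_top"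
    unfolding ratio E_def by (rule tendsto_exp_ratio_leading_weight[OF finite_SM[OF wf] I])
  then show ?thesis unfolding Prob_def by (rule tendsto_Lim[OF trivial_limit_at_top_linorder])
qed

lemma most_probable_iff_lex_minimal:
  assumes wf: "wf_lpmln \<Pi>" and I: "I \<in> SM \<Pi>"
  shows "I \<in> most_probable \<Pi> \<longleftrightarrow>
    (\<forall>J\<in>SM \<Pi>. (hard_penalty \<Pi> I, soft_penalty \<Pi> I) \<le> (hard_penalty \<Pi> J, soft_penalty \<Pi> J))"
proof -
  let ?lw = "leading_weight (hard_penalty \<Pi>) (soft_penalty \<Pi>) (SM \<Pi>)"
  have "(\<Sum>J\<in>SM \<Pi>. ?lw J) > 0"
    using I by (intro sum_leading_weight_pos[OF finite_SM[OF wf]]) auto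
  then have "I \<in> most_probable \<Pi> \<longleftrightarrow> (\<forall>J\<in>SM \<Pi>. ?lw J \<le> ?lw I)"
    using I by (auto simp: most_probable_def Prob_eq_leading_weight[OF wf] divide_le_cancel)
  also have "\<dots> \<longleftrightarrow>
      (\<forall>J\<in>SM \<Pi>. (hard_penalty \<Pi> I, soft_penalty \<Pi> I) \<le> (hard_penalty \<Pi> J, soft_penalty \<Pi> J))"
    by (rule leading_weight_maximal_iff_lex_minimal[OF finite_SM[OF wf] I])
  finally show ?thesis .
qed

fun weak_level :: "weight \<Rightarrow> nat" where
  "weak_level (Soft r) = 0"
| "weak_level Hard = 1"

fun weak_weight :: "weight \<Rightarrow> real" where
  "weak_weight (Soft r) = r"
| "weak_weight Hard = 1"

lemma tr_wcs_eq:
  "tr_wcs \<Pi> = (\<lambda>(i, c). WC {Unsat i (wt \<Pi> i) c} {}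
      (weak_weight (wt \<Pi> i)) (weak_level (wt \<Pi> i)) (i, c)) ` gr_idx \<Pi>"
proof -
  have "(case w of Hard \<Rightarrow> 1 | Soft r \<Rightarrow> r) = weak_weight w"
    "(case w of Hard \<Rightarrow> 1 | Soft r \<Rightarrow> 0) = weak_level w" for w
    by (cases w; simp)+
  then show ?thesis unfolding tr_wcs_def by simp
qed

lemma penalty_tr_wcs_phi:
  fixes \<Pi> :: "('a, 'i, 'c) lpmln"
  assumes wf: "wf_lpmln \<Pi>"
  shows "penalty (tr_wcs \<Pi>) (phi \<Pi> I) l =
    (\<Sum>(i, c)\<in>violated \<Pi> I. if weak_level (wt \<Pi> i) = l then weak_weight (wt \<Pi> i) else 0)"
proof -
  define F :: "'i \<times> 'c \<Rightarrow> (('a, 'i, 'c) tatom, 'i \<times> 'c) wc"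
    where "F = (\<lambda>(i, c). WC {Unsat i (wt \<Pi> i) c} {}
      (weak_weight (wt \<Pi> i)) (weak_level (wt \<Pi> i)) (i, c))"
  let ?V = "{(i, c) \<in> violated \<Pi> I. weak_level (wt \<Pi> i) = l}"
  have image:
    "{C \<in> tr_wcs \<Pi>. wlevel C = l \<and> wpos C \<subseteq> phi \<Pi> I \<and> wneg C \<inter> phi \<Pi> I = {}} = F ` ?V"
    unfolding tr_wcs_eq F_def by (auto simp: violated_def Unsat_in_phi_iff)
  have inj: "inj_on F ?V" by (auto simp: inj_on_def F_def)
  have "penalty (tr_wcs \<Pi>) (phi \<Pi> I) l = (\<Sum>(i, c)\<in>?V. weak_weight (wt \<Pi> i))"
    unfolding penalty_def image sum.reindex[OF inj] by (simp add: F_def case_prod_unfold)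
  also have "\<dots> =
      (\<Sum>(i, c)\<in>violated \<Pi> I. if weak_level (wt \<Pi> i) = l then weak_weight (wt \<Pi> i) else 0)"
    using finite_violated[OF wf] by (simp add: sum.inter_filter case_prod_unfold)
  finally show ?thesis .
qed

lemma dominated_tr_wcs_phi_iff:
  assumes wf: "wf_lpmln \<Pi>"
  shows "dominated (tr_wcs \<Pi>) (phi \<Pi> I) (phi \<Pi> J) \<longleftrightarrow>
    (hard_penalty \<Pi> J, soft_penalty \<Pi> J) < (hard_penalty \<Pi> I, soft_penalty \<Pi> I)"
proof -
  have "weak_level w \<le> 1" for w by (cases w) simp_all
  then have levels: "\<forall>C\<in>tr_wcs \<Pi>. wlevel C \<le> 1"
    unfolding tr_wcs_eq by auto
  have parts: "hard_part w = (if weak_level w = 1 then weak_weight w else 0)"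
    "soft_part w = (if weak_level w = 0 then weak_weight w else 0)" for w
    by (cases w; simp)+
  have "penalty (tr_wcs \<Pi>) (phi \<Pi> K) 1 = hard_penalty \<Pi> K"
    "penalty (tr_wcs \<Pi>) (phi \<Pi> K) 0 = soft_penalty \<Pi> K" for K
    unfolding penalty_tr_wcs_phi[OF wf] hard_penalty_def soft_penalty_def parts by simp_all
  then show ?thesis by (simp only: dominated_iff_lex_less[OF levels])
qed

lemma optimal_phi_iff_most_probable:
  assumes wf: "wf_lpmln \<Pi>" and I: "I \<in> SM \<Pi>"
  shows "optimal (tr_rules \<Pi>) (tr_wcs \<Pi>) (phi \<Pi> I) \<longleftrightarrow> I \<in> most_probable \<Pi>"
proof -
  have stable_iff: "stable (tr_rules \<Pi>) J \<longleftrightarrow> J \<in> phi \<Pi> ` SM \<Pi>" for J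
    using bij_betw_imp_surj_on[OF bij_betw_phi_SM] by blast
  have "optimal (tr_rules \<Pi>) (tr_wcs \<Pi>) (phi \<Pi> I) \<longleftrightarrow>
      (\<forall>J\<in>SM \<Pi>. \<not> dominated (tr_wcs \<Pi>) (phi \<Pi> I) (phi \<Pi> J))"
    unfolding optimal_def stable_iff using I by blast
  also have "\<dots> \<longleftrightarrow>
      (\<forall>J\<in>SM \<Pi>. (hard_penalty \<Pi> I, soft_penalty \<Pi> I) \<le> (hard_penalty \<Pi> J, soft_penalty \<Pi> J))"
    by (simp only: dominated_tr_wcs_phi_iff[OF wf] not_less)
  also have "\<dots> \<longleftrightarrow> I \<in> most_probable \<Pi>"
    by (rule most_probable_iff_lex_minimal[OF wf I, symmetric])
  finally show ?thesis .
qed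

theorem theorem3:
  fixes \<Pi> :: "('a, 'i, 'c) lpmln"
  assumes "wf_lpmln \<Pi>"
  shows "bij_betw (phi \<Pi>) (SM \<Pi>) {J. stable (tr_rules \<Pi>) J} \<and>
         (\<forall>I\<in>SM \<Pi>. \<forall>a. W_pnt \<Pi> a I =
           exp (- (\<Sum>(i, w, c)\<in>{(i, w, c). Unsat i w c \<in> phi \<Pi> I}. wval w a))) \<and>
         bij_betw (phi \<Pi>) (most_probable \<Pi>) {J. optimal (tr_rules \<Pi>) (tr_wcs \<Pi>) J}"
proof (intro conjI ballI allI)
  show bij: "bij_betw (phi \<Pi>) (SM \<Pi>) {J. stable (tr_rules \<Pi>) J}"
    by (rule bij_betw_phi_SM)
  show "W_pnt \<Pi> a I = exp (- (\<Sum>(i, w, c)\<in>{(i, w, c). Unsat i w c \<in> phi \<Pi> I}. wval w a))"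
    if "I \<in> SM \<Pi>" for I a
    using that by (rule W_pnt_eq_sum_Unsat)
  show "bij_betw (phi \<Pi>) (most_probable \<Pi>) {J. optimal (tr_rules \<Pi>) (tr_wcs \<Pi>) J}"
  proof (rule bij_betw_restrict[OF bij])
    show "most_probable \<Pi> \<subseteq> SM \<Pi>" unfolding most_probable_def by blast
    show "{J. optimal (tr_rules \<Pi>) (tr_wcs \<Pi>) J} \<subseteq> {J. stable (tr_rules \<Pi>) J}"
      unfolding optimal_def by blast
    show "phi \<Pi> I \<in> {J. optimal (tr_rules \<Pi>) (tr_wcs \<Pi>) J} \<longleftrightarrow> I \<in> most_probable \<Pi>"
      if "I \<in> SM \<Pi>" for I
      using optimal_phi_iff_most_probable[OF assms that] by simp
  qed
qed

end
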